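(* For every ordinal $\alpha$, $(T_\alpha,P_\alpha)\le(T_{\alpha+1},P_{\alpha+1})$, where $\langle (T_\alpha,P_\alpha)\rangle_{\alpha}$ is the transfinite sequence defined by $(T_0,P_0)=((\emptyset,\emptyset),(\emptyset,\emptyset))$, $(T_{\beta+1},P_{\beta+1})=\Gamma_{\mathscr{TP}}(T_\beta,P_\beta)$ and $(T_\lambda,P_\lambda)=\bigcup_{\beta<\lambda}(T_\beta,P_\beta)$ for limit $\lambda$.
   Context: Language. Let $\mathcal L_{\mathbb N}$ be the language of first-order Peano arithmetic and $\mathcal L=\mathcal L_{\mathbb N}\cup\{\mathrm T,\mathrm P\}$ with unary predicates $\mathrm T,\mathrm P$. $\mathcal L$-formulas are in Tait style: literals are $s=t$, $s\neq t$, $\mathrm Tt$, $\neg\mathrm Tt$, $\mathrm Pt$, $\neg\mathrm Pt$; formulas are built from literals by $\wedge,\vee,\forall,\exists$; negation of an arbitrary formula is defined by De Morgan dualities with $\neg\neg\varphi:=\varphi$. A standard Gödel numbering is fixed; $\#e$ is the code of $e$, $\ulcorner e\urcorner$ the numeral of $\#e$, $\mathrm{val}(t)$ the value of a closed term $t$, $\dot\neg$ the primitive recursive function with $\dot\neg(\#\varphi)=\#\neg\varphi$; $\mathrm T\varphi,\mathrm P\varphi$ abbreviate $\mathrm T\ulcorner\varphi\urcorner,\mathrm P\ulcorner\varphi\urcorner$. Semantics. A partial model is $(\mathbb N,T,P)$ with $\mathbb N$ the standard model and $T=(T^+,T^-)$, $P=(P^+,P^-)$ pairs of subsets of $\omega$.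 Strong Kleene satisfaction $\models_{SK}$: arithmetic literals evaluated in $\mathbb N$; $\mathrm Tt$ satisfied iff $\mathrm{val}(t)\in T^+$, $\neg\mathrm Tt$ iff $\mathrm{val}(t)\in T^-$, likewise for $\mathrm P$ with $P^\pm$; conjunction iff both, disjunction iff at least one, $\forall x\varphi(x)$ iff all numeral instances, $\exists x\varphi(x)$ iff some numeral instance. Base paradoxicality. $\mathrm{PA}[\mathrm{SK}]$ is the two-sided sequent calculus for Strong Kleene logic with identity in $\mathcal L$ (initial sequents $\varphi\Rightarrow\varphi$, cut, weakening, the rule from $\Gamma\Rightarrow\Delta,\varphi$ infer $\neg\varphi,\Gamma\Rightarrow\Delta$, usual rules for $\wedge,\vee,\forall,\exists$, reflexivity $\Rightarrow t=t$, replacement from $\Gamma\Rightarrow\Delta,\varphi(t)$ infer $\Gamma\Rightarrow\Delta,s\neq t,\varphi(s)$) plus the initial sequents of Peano arithmetic and the induction rule for all $\mathcal L$-formulas. A sentence $\varphi$ is base paradoxical iff $\mathrm{PA}[\mathrm{SK}]$ derives $\varphi\Leftrightarrow\neg\mathrm T\varphi$ and $\neg\varphi\Leftrightarrow\mathrm T\varphi$. $B(x)$ is an $\mathcal L_{\mathbb N}$-formula defining in $\mathbb N$ the set of codes of base paradoxical sentences, and $\Pi(x):=B(x)\vee B(\dot\neg x)$. Jump. Let $\mathscr P(x)$ be the $\mathcal L$-formula which is the disjunction of: (1) $x$ codes a sentence and $\Pi(x)$; (2) $x$ codes a sentence $\mathrm Tt$ ($t$ a closed term) and $\mathrm P(\mathrm{val}(t))$;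 (3) $x$ codes a sentence $\neg\mathrm Tt$ and $\mathrm P(\mathrm{val}(t))$; (4) $x$ codes a sentence $\psi\wedge\theta$ and $(\mathrm P\psi\wedge\mathrm P\theta)\vee(\mathrm T\psi\wedge\mathrm P\theta)\vee(\mathrm T\theta\wedge\mathrm P\psi)$; (5) $x$ codes a sentence $\psi\vee\theta$ and $(\mathrm P\psi\wedge\mathrm P\theta)\vee(\neg\mathrm T\psi\wedge\mathrm P\theta)\vee(\neg\mathrm T\theta\wedge\mathrm P\psi)$; (6) $x$ codes a sentence $\forall v\psi$ and $\exists y\,\mathrm P\psi(\dot y)\wedge\forall y(\mathrm P\psi(\dot y)\vee\mathrm T\psi(\dot y))$; (7) $x$ codes a sentence $\exists v\psi$ and $\exists y\,\mathrm P\psi(\dot y)\wedge\forall y(\mathrm P\psi(\dot y)\vee\neg\mathrm T\psi(\dot y))$; here $\psi(\dot y)$ is the code of the result of substituting the numeral of $y$ for $v$. Write $\mathscr P(\varphi)$ for $\mathscr P(\ulcorner\varphi\urcorner)$. Define $\Gamma_{\mathscr{TP}}(T,P)=\big((\{\#\varphi:(\mathbb N,T,P)\models_{SK}\varphi\},\{\#\varphi:(\mathbb N,T,P)\models_{SK}\neg\varphi\}),(\{\#\varphi:(\mathbb N,T,P)\models_{SK}\mathscr P(\varphi)\},\{\#\varphi:(\mathbb N,T,P)\models_{SK}\varphi\vee\neg\varphi\})\big)$, $\varphi$ ranging over $\mathcal L$-sentences. Order: $(X,Y)\le(X',Y')$ iff $X\subseteq X'$ and $Y\subseteq Y'$; $(T,P)\le(T',P')$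 iff $T\le T'$ and $P\le P'$; unions are componentwise. *)

theory Defs
  imports Main "HOL-Library.Nat_Bijection"
begin

section \<open>Syntax of the language L = L_N + {T, P} (Tait style)\<close>

datatype tm = Var nat | ZeroT | SucT tm | PlusT tm tm | TimesT tm tm

datatype fm = Eq tm tm | Neq tm tm | Tr tm | NTr tm | Pr tm | NPr tm
  | Conj fm fm | Disj fm fm | All nat fm | Ex nat fm

fun neg :: "fm \<Rightarrow> fm" where
  "neg (Eq s t) = Neq s t"
| "neg (Neq s t) = Eq s t"
| "neg (Tr t) = NTr t"
| "neg (NTr t) = Tr t"
| "neg (Pr t) = NPr t"
| "neg (NPr t) = Pr t"
| "neg (Conj a b) = Disj (neg a) (neg b)"
| "neg (Disj a b) = Conj (neg a) (neg b)"
| "neg (All x a) = Ex x (neg a)"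
| "neg (Ex x a) = All x (neg a)"

fun fvt :: "tm \<Rightarrow> nat set" where
  "fvt (Var n) = {n}"
| "fvt ZeroT = {}"
| "fvt (SucT t) = fvt t"
| "fvt (PlusT s t) = fvt s \<union> fvt t"
| "fvt (TimesT s t) = fvt s \<union> fvt t"

fun fv :: "fm \<Rightarrow> nat set" where
  "fv (Eq s t) = fvt s \<union> fvt t"
| "fv (Neq s t) = fvt s \<union> fvt t"
| "fv (Tr t) = fvt t"
| "fv (NTr t) = fvt t"
| "fv (Pr t) = fvt t"
| "fv (NPr t) = fvt t"
| "fv (Conj a b) = fv a \<union> fv b"
| "fv (Disj a b) = fv a \<union> fv b"
| "fv (All x a) = fv a - {x}"
| "fv (Ex x a) = fv a - {x}"

definition sentence :: "fm \<Rightarrow> bool" where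
  "sentence \<phi> \<longleftrightarrow> fv \<phi> = {}"

fun substt :: "nat \<Rightarrow> tm \<Rightarrow> tm \<Rightarrow> tm" where
  "substt x s (Var n) = (if n = x then s else Var n)"
| "substt x s ZeroT = ZeroT"
| "substt x s (SucT t) = SucT (substt x s t)"
| "substt x s (PlusT a b) = PlusT (substt x s a) (substt x s b)"
| "substt x s (TimesT a b) = TimesT (substt x s a) (substt x s b)"

fun subst :: "nat \<Rightarrow> tm \<Rightarrow> fm \<Rightarrow> fm" where
  "subst x s (Eq a b) = Eq (substt x s a) (substt x s b)"
| "subst x s (Neq a b) = Neq (substt x s a) (substt x s b)"
| "subst x s (Tr t) = Tr (substt x s t)"
| "subst x s (NTr t) = NTr (substt x s t)"
| "subst x s (Pr t) = Pr (substt x s t)"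
| "subst x s (NPr t) = NPr (substt x s t)"
| "subst x s (Conj a b) = Conj (subst x s a) (subst x s b)"
| "subst x s (Disj a b) = Disj (subst x s a) (subst x s b)"
| "subst x s (All y a) = (if y = x then All y a else All y (subst x s a))"
| "subst x s (Ex y a) = (if y = x then Ex y a else Ex y (subst x s a))"

fun free_for :: "tm \<Rightarrow> nat \<Rightarrow> fm \<Rightarrow> bool" where
  "free_for s x (Conj a b) = (free_for s x a \<and> free_for s x b)"
| "free_for s x (Disj a b) = (free_for s x a \<and> free_for s x b)"
| "free_for s x (All y a) = (x \<notin> fv (All y a) \<or> (y \<notin> fvt s \<and> free_for s x a))"
| "free_for s x (Ex y a) = (x \<notin> fv (Ex y a) \<or> (y \<notin> fvt s \<and> free_for s x a))"
| "free_for s x _ = True"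

fun num :: "nat \<Rightarrow> tm" where
  "num 0 = ZeroT"
| "num (Suc n) = SucT (num n)"

fun evalt :: "(nat \<Rightarrow> nat) \<Rightarrow> tm \<Rightarrow> nat" where
  "evalt e (Var n) = e n"
| "evalt e ZeroT = 0"
| "evalt e (SucT t) = Suc (evalt e t)"
| "evalt e (PlusT a b) = evalt e a + evalt e b"
| "evalt e (TimesT a b) = evalt e a * evalt e b"

definition val :: "tm \<Rightarrow> nat" where
  "val t = evalt (\<lambda>_. 0) t"

section \<open>A fixed standard Goedel numbering\<close>

fun codet :: "tm \<Rightarrow> nat" where
  "codet (Var n) = prod_encode (0, n)"
| "codet ZeroT = prod_encode (1, 0)"
| "codet (SucT t) = prod_encode (2, codet t)"
| "codet (PlusT a b) = prod_encode (3, prod_encode (codet a, codet b))"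
| "codet (TimesT a b) = prod_encode (4, prod_encode (codet a, codet b))"

fun code :: "fm \<Rightarrow> nat" where
  "code (Eq a b) = prod_encode (0, prod_encode (codet a, codet b))"
| "code (Neq a b) = prod_encode (1, prod_encode (codet a, codet b))"
| "code (Tr t) = prod_encode (2, codet t)"
| "code (NTr t) = prod_encode (3, codet t)"
| "code (Pr t) = prod_encode (4, codet t)"
| "code (NPr t) = prod_encode (5, codet t)"
| "code (Conj a b) = prod_encode (6, prod_encode (code a, code b))"
| "code (Disj a b) = prod_encode (7, prod_encode (code a, code b))"
| "code (All x a) = prod_encode (8, prod_encode (x, code a))"
| "code (Ex x a) = prod_encode (9, prod_encode (x, code a))"

definition gq :: "fm \<Rightarrow> tm" where
  "gq \<phi> = num (code \<phi>)"

section \<open>Partial models and Strong Kleene satisfaction\<close>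

text \<open>A partial model (N,T,P) is given by ((T+,T-),(P+,P-)).\<close>
type_synonym pmodel = "(nat set \<times> nat set) \<times> (nat set \<times> nat set)"

fun fdepth :: "fm \<Rightarrow> nat" where
  "fdepth (Conj a b) = Suc (max (fdepth a) (fdepth b))"
| "fdepth (Disj a b) = Suc (max (fdepth a) (fdepth b))"
| "fdepth (All x a) = Suc (fdepth a)"
| "fdepth (Ex x a) = Suc (fdepth a)"
| "fdepth _ = 0"

lemma fdepth_subst [simp]: "fdepth (subst x s \<phi>) = fdepth \<phi>"
  by (induction \<phi>) auto

text \<open>Strong Kleene satisfaction (intended for sentences; quantifiers via numeral instances).\<close>
function sat :: "pmodel \<Rightarrow> fm \<Rightarrow> bool" where
  "sat M (Eq s t) = (val s = val t)"
| "sat M (Neq s t) = (val s \<noteq> val t)"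
| "sat M (Tr t) = (val t \<in> fst (fst M))"
| "sat M (NTr t) = (val t \<in> snd (fst M))"
| "sat M (Pr t) = (val t \<in> fst (snd M))"
| "sat M (NPr t) = (val t \<in> snd (snd M))"
| "sat M (Conj a b) = (sat M a \<and> sat M b)"
| "sat M (Disj a b) = (sat M a \<or> sat M b)"
| "sat M (All x a) = (\<forall>n. sat M (subst x (num n) a))"
| "sat M (Ex x a) = (\<exists>n. sat M (subst x (num n) a))"
  by pat_completeness auto
termination
  by (relation "measure (\<lambda>(M, \<phi>). fdepth \<phi>)") auto

section \<open>The sequent calculus PA[SK]\<close>

definition fvs :: "fm set \<Rightarrow> nat set" where
  "fvs G = \<Union> (fv ` G)"

inductive deriv :: "fm set \<Rightarrow> fm set \<Rightarrow> bool" where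
  init: "deriv {\<phi>} {\<phi>}"
| cut: "deriv G (insert \<phi> D) \<Longrightarrow> deriv (insert \<phi> G) D \<Longrightarrow> deriv G D"
| weak: "deriv G D \<Longrightarrow> finite G' \<Longrightarrow> finite D' \<Longrightarrow> deriv (G \<union> G') (D \<union> D')"
| negL: "deriv G (insert \<phi> D) \<Longrightarrow> deriv (insert (neg \<phi>) G) D"
| conjL1: "deriv (insert \<phi> G) D \<Longrightarrow> deriv (insert (Conj \<phi> \<psi>) G) D"
| conjL2: "deriv (insert \<psi> G) D \<Longrightarrow> deriv (insert (Conj \<phi> \<psi>) G) D"
| conjR: "deriv G (insert \<phi> D) \<Longrightarrow> deriv G (insert \<psi> D) \<Longrightarrow> deriv G (insert (Conj \<phi> \<psi>) D)"
| disjL: "deriv (insert \<phi> G) D \<Longrightarrow> deriv (insert \<psi> G) D \<Longrightarrow> deriv (insert (Disj \<phi> \<psi>) G) D"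
| disjR1: "deriv G (insert \<phi> D) \<Longrightarrow> deriv G (insert (Disj \<phi> \<psi>) D)"
| disjR2: "deriv G (insert \<psi> D) \<Longrightarrow> deriv G (insert (Disj \<phi> \<psi>) D)"
| allL: "free_for t x \<phi> \<Longrightarrow> deriv (insert (subst x t \<phi>) G) D \<Longrightarrow> deriv (insert (All x \<phi>) G) D"
| allR: "free_for (Var a) x \<phi> \<Longrightarrow> a \<notin> fvs G \<union> fvs D \<union> fv (All x \<phi>) \<Longrightarrow>
          deriv G (insert (subst x (Var a) \<phi>) D) \<Longrightarrow> deriv G (insert (All x \<phi>) D)"
| exL: "free_for (Var a) x \<phi> \<Longrightarrow> a \<notin> fvs G \<union> fvs D \<union> fv (Ex x \<phi>) \<Longrightarrow>
          deriv (insert (subst x (Var a) \<phi>) G) D \<Longrightarrow> deriv (insert (Ex x \<phi>) G) D"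
| exR: "free_for t x \<phi> \<Longrightarrow> deriv G (insert (subst x t \<phi>) D) \<Longrightarrow> deriv G (insert (Ex x \<phi>) D)"
| refl: "deriv {} {Eq t t}"
| repl: "free_for t x \<phi> \<Longrightarrow> free_for s x \<phi> \<Longrightarrow> deriv G (insert (subst x t \<phi>) D) \<Longrightarrow>
          deriv G (insert (Neq s t) (insert (subst x s \<phi>) D))"
| pa1: "deriv {} {Neq (SucT t) ZeroT}"
| pa2: "deriv {Eq (SucT s) (SucT t)} {Eq s t}"
| pa3: "deriv {} {Eq (PlusT t ZeroT) t}"
| pa4: "deriv {} {Eq (PlusT s (SucT t)) (SucT (PlusT s t))}"
| pa5: "deriv {} {Eq (TimesT t ZeroT) ZeroT}"
| pa6: "deriv {} {Eq (TimesT s (SucT t)) (PlusT (TimesT s t) s)}"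
| ind: "free_for (Var a) x \<phi> \<Longrightarrow> free_for (SucT (Var a)) x \<phi> \<Longrightarrow> free_for t x \<phi> \<Longrightarrow>
          a \<notin> fvs G \<union> fvs D \<union> (fv \<phi> - {x}) \<Longrightarrow>
          deriv (insert (subst x (Var a) \<phi>) G) (insert (subst x (SucT (Var a)) \<phi>) D) \<Longrightarrow>
          deriv (insert (subst x ZeroT \<phi>) G) (insert (subst x t \<phi>) D)"

definition base_paradoxical :: "fm \<Rightarrow> bool" where
  "base_paradoxical \<phi> \<longleftrightarrow> sentence \<phi> \<and>
     deriv {\<phi>} {NTr (gq \<phi>)} \<and> deriv {NTr (gq \<phi>)} {\<phi>} \<and>
     deriv {neg \<phi>} {Tr (gq \<phi>)} \<and> deriv {Tr (gq \<phi>)} {neg \<phi>}"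

definition Bset :: "nat set" where
  "Bset = {code \<phi> |\<phi>. base_paradoxical \<phi>}"

section \<open>The jump\<close>

text \<open>(N,T,P) satisfies (in Strong Kleene) the formula \<P>(\<ulcorner>phi\<urcorner>), unfolded clause by clause.\<close>
definition Psat :: "pmodel \<Rightarrow> fm \<Rightarrow> bool" where
  "Psat M \<phi> \<longleftrightarrow> sentence \<phi> \<and>
    (let Tp = fst (fst M); Tn = snd (fst M); Pp = fst (snd M) in
     (code \<phi> \<in> Bset \<or> code (neg \<phi>) \<in> Bset) \<or>
     (case \<phi> of
        Tr t \<Rightarrow> val t \<in> Pp
      | NTr t \<Rightarrow> val t \<in> Pp
      | Conj \<psi> \<theta> \<Rightarrow> (code \<psi> \<in> Pp \<and> code \<theta> \<in> Pp) \<or> (code \<psi> \<in> Tp \<and> code \<theta> \<in> Pp)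
                     \<or> (code \<theta> \<in> Tp \<and> code \<psi> \<in> Pp)
      | Disj \<psi> \<theta> \<Rightarrow> (code \<psi> \<in> Pp \<and> code \<theta> \<in> Pp) \<or> (code \<psi> \<in> Tn \<and> code \<theta> \<in> Pp)
                     \<or> (code \<theta> \<in> Tn \<and> code \<psi> \<in> Pp)
      | All v \<psi> \<Rightarrow> (\<exists>y. code (subst v (num y) \<psi>) \<in> Pp) \<and>
                    (\<forall>y. code (subst v (num y) \<psi>) \<in> Pp \<or> code (subst v (num y) \<psi>) \<in> Tp)
      | Ex v \<psi> \<Rightarrow> (\<exists>y. code (subst v (num y) \<psi>) \<in> Pp) \<and>
                    (\<forall>y. code (subst v (num y) \<psi>) \<in> Pp \<or> code (subst v (num y) \<psi>) \<in> Tn)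
      | _ \<Rightarrow> False))"

definition Gamma_TP :: "pmodel \<Rightarrow> pmodel" where
  "Gamma_TP M =
    (({code \<phi> |\<phi>. sentence \<phi> \<and> sat M \<phi>},
      {code \<phi> |\<phi>. sentence \<phi> \<and> sat M (neg \<phi>)}),
     ({code \<phi> |\<phi>. sentence \<phi> \<and> Psat M \<phi>},
      {code \<phi> |\<phi>. sentence \<phi> \<and> sat M (Disj \<phi> (neg \<phi>))}))"

definition le_pm :: "pmodel \<Rightarrow> pmodel \<Rightarrow> bool" where
  "le_pm M N \<longleftrightarrow> fst (fst M) \<subseteq> fst (fst N) \<and> snd (fst M) \<subseteq> snd (fst N) \<and>
                 fst (snd M) \<subseteq> fst (snd N) \<and> snd (snd M) \<subseteq> snd (snd N)"

definition Union_pm :: "pmodel set \<Rightarrow> pmodel" where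
  "Union_pm S = ((\<Union>M\<in>S. fst (fst M), \<Union>M\<in>S. snd (fst M)),
                 (\<Union>M\<in>S. fst (snd M), \<Union>M\<in>S. snd (snd M)))"

section \<open>The transfinite sequence, indexed by an arbitrary well-order\<close>

definition is_succ :: "'a::wellorder \<Rightarrow> 'a \<Rightarrow> bool" where
  "is_succ \<beta> \<alpha> \<longleftrightarrow> \<beta> < \<alpha> \<and> \<not> (\<exists>\<gamma>. \<beta> < \<gamma> \<and> \<gamma> < \<alpha>)"

definition seqTP :: "'a::wellorder \<Rightarrow> pmodel" where
  "seqTP = wfrec {(x, y). x < y}
     (\<lambda>f \<alpha>. if \<alpha> = (LEAST z. True) then (({}, {}), ({}, {}))
            else if (\<exists>\<beta>. is_succ \<beta> \<alpha>) then Gamma_TP (f (THE \<beta>. is_succ \<beta> \<alpha>))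
            else Union_pm {f \<beta> |\<beta>. \<beta> < \<alpha>})"

end

theory Submission
  imports Defs
begin

text \<open>
  Strong Kleene satisfaction and every clause of \<open>\<P>\<close> are positive in \<open>T\<close> and \<open>P\<close>,
  so the jump \<open>\<Gamma>\<close> is monotone. By induction on \<open>\<alpha>\<close>, every stage lies below its jump:
  trivially at the empty stage; at \<open>\<alpha> = \<delta> + 1\<close>, apply \<open>\<Gamma>\<close> to
  \<open>(T\<^sub>\<delta>, P\<^sub>\<delta>) \<le> \<Gamma>(T\<^sub>\<delta>, P\<^sub>\<delta>) = (T\<^sub>\<alpha>, P\<^sub>\<alpha>)\<close>; at a limit, each earlier stage \<open>\<beta>\<close> satisfies
  \<open>(T\<^sub>\<beta>, P\<^sub>\<beta>) \<le> \<Gamma>(T\<^sub>\<beta>, P\<^sub>\<beta>) \<le> \<Gamma>(T\<^sub>\<alpha>, P\<^sub>\<alpha>)\<close> because \<open>(T\<^sub>\<alpha>, P\<^sub>\<alpha>)\<close> is their union.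
\<close>

lemma le_pm_trans: "le_pm L M \<Longrightarrow> le_pm M N \<Longrightarrow> le_pm L N"
  by (auto simp: le_pm_def)

lemma le_pm_empty: "le_pm (({}, {}), ({}, {})) M"
  by (simp add: le_pm_def)

lemma Union_pm_upper: "M \<in> S \<Longrightarrow> le_pm M (Union_pm S)"
  by (auto simp: Union_pm_def le_pm_def)

lemma Union_pm_least: "(\<And>M. M \<in> S \<Longrightarrow> le_pm M N) \<Longrightarrow> le_pm (Union_pm S) N"
  unfolding Union_pm_def le_pm_def by (simp add: UN_least)

lemma sat_mono: "le_pm M N \<Longrightarrow> sat M \<phi> \<Longrightarrow> sat N \<phi>"
  by (induction M \<phi> rule: sat.induct) (auto simp: le_pm_def)

lemma Psat_mono: "le_pm M N \<Longrightarrow> Psat M \<phi> \<Longrightarrow> Psat N \<phi>"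
  unfolding Psat_def le_pm_def Let_def
  by (cases \<phi>) (simp_all, blast+)

lemma Gamma_TP_mono: "le_pm M N \<Longrightarrow> le_pm (Gamma_TP M) (Gamma_TP N)"
  unfolding Gamma_TP_def
  using sat_mono Psat_mono by (simp add: le_pm_def[of "(_, _)" "(_, _)"]) blast

lemma is_succ_unique: "is_succ \<beta> \<alpha> \<Longrightarrow> is_succ \<gamma> \<alpha> \<Longrightarrow> \<beta> = \<gamma>"
  unfolding is_succ_def by (metis linorder_neqE)

lemma seqTP_unfold:
  "seqTP (\<alpha>::'a::wellorder) =
     (if \<alpha> = (LEAST z. True) then (({}, {}), ({}, {}))
      else if \<exists>\<beta>. is_succ \<beta> \<alpha> then Gamma_TP (seqTP (THE \<beta>. is_succ \<beta> \<alpha>))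
      else Union_pm {seqTP \<beta> |\<beta>. \<beta> < \<alpha>})"
proof -
  let ?R = "{(x, y). x < (y::'a)}"
  have restrict: "cut seqTP ?R \<alpha> \<beta> = seqTP \<beta>" if "\<beta> < \<alpha>" for \<beta>
    using that by (simp add: cut_apply)
  have the_pred: "(THE \<beta>. is_succ \<beta> \<alpha>) < \<alpha>" if "is_succ \<beta> \<alpha>" for \<beta>
    using that the_equality[of "\<lambda>\<beta>. is_succ \<beta> \<alpha>"] is_succ_unique
    by (metis is_succ_def)
  have "{cut seqTP ?R \<alpha> \<beta> |\<beta>. \<beta> < \<alpha>} = {seqTP \<beta> |\<beta>. \<beta> < \<alpha>}"
    using restrict by (metis (lifting))
  moreover have "seqTP \<alpha> =
     (if \<alpha> = (LEAST z. True) then (({}, {}), ({}, {}))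
      else if \<exists>\<beta>. is_succ \<beta> \<alpha> then Gamma_TP (cut seqTP ?R \<alpha> (THE \<beta>. is_succ \<beta> \<alpha>))
      else Union_pm {cut seqTP ?R \<alpha> \<beta> |\<beta>. \<beta> < \<alpha>})"
    unfolding seqTP_def by (rule wfrec[OF wf])
  ultimately show ?thesis
    using restrict the_pred by auto
qed

lemma seqTP_least: "seqTP (LEAST z::'a::wellorder. True) = (({}, {}), ({}, {}))"
  by (simp add: seqTP_unfold[of "LEAST z. True"])

lemma seqTP_succ: "is_succ \<beta> \<alpha> \<Longrightarrow> seqTP \<alpha> = Gamma_TP (seqTP \<beta>)"
  using seqTP_unfold[of \<alpha>] the_equality[of "\<lambda>\<beta>. is_succ \<beta> \<alpha>"] is_succ_unique
  by (metis Least_le is_succ_def not_le)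

lemma seqTP_limit:
  "\<alpha> \<noteq> (LEAST z. True) \<Longrightarrow> \<nexists>\<beta>. is_succ \<beta> \<alpha> \<Longrightarrow> seqTP \<alpha> = Union_pm {seqTP \<beta> |\<beta>. \<beta> < \<alpha>}"
  by (simp add: seqTP_unfold[of \<alpha>])

lemma seqTP_le_Gamma_TP: "le_pm (seqTP \<alpha>) (Gamma_TP (seqTP \<alpha>))"
proof (induction \<alpha> rule: less_induct)
  case (less \<alpha>)
  consider "\<alpha> = (LEAST z. True)" | \<delta> where "is_succ \<delta> \<alpha>"
    | "\<alpha> \<noteq> (LEAST z. True)" "\<nexists>\<delta>. is_succ \<delta> \<alpha>"
    by blast
  then show ?case
  proof cases
    case 1
    then show ?thesis by (simp add: seqTP_least le_pm_empty)
  next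
    case (2 \<delta>)
    then have "le_pm (seqTP \<delta>) (seqTP \<alpha>)"
      using less seqTP_succ is_succ_def by metis
    then show ?thesis
      using seqTP_succ[OF 2] Gamma_TP_mono by simp
  next
    case 3
    have "le_pm (seqTP \<beta>) (Gamma_TP (seqTP \<alpha>))" if "\<beta> < \<alpha>" for \<beta>
    proof -
      have "le_pm (seqTP \<beta>) (seqTP \<alpha>)"
        using seqTP_limit[OF 3] that by (auto intro: Union_pm_upper)
      then show ?thesis
        using less[OF that] Gamma_TP_mono le_pm_trans by blast
    qed
    then show ?thesis
      unfolding seqTP_limit[OF 3] by (auto intro: Union_pm_least)
  qed
qed

theorem mainTheorem4:
  fixes \<alpha> \<beta> :: "'a::wellorder"
  assumes "is_succ \<alpha> \<beta>"
  shows "le_pm (seqTP \<alpha>) (seqTP \<beta>)"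
  using seqTP_le_Gamma_TP[of \<alpha>] seqTP_succ[OF assms] by simp

end
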